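(* Let $\mathcal{A}=[M]^K$, $\mathcal{B}=[K]\times[M]$ with coherence relation $\mathcal{R}_C$, and let $\emptyset\subsetneq B\subsetneq\mathcal{B}$. Define $$\mathcal{R}_C(B)=\big[\mathcal{R}_C\cap(\mathcal{N}'_{\mathcal{R}_C}(B)\times B)\big]\cup\big[\mathcal{R}_C\cap(\overline{\mathcal{N}'_{\mathcal{R}_C}(B)}\times\overline{B})\big],$$ viewed as the edge set of a bipartite graph on $\mathcal{A}\sqcup\mathcal{B}$. Then: (1) every pair $(a,b)$ with $b\in\overline{B}$ and $a\in\overline{\mathcal{N}'_{\mathcal{R}_C}(B)}$ is connected by a path in $\mathcal{R}_C(B)$; (2) if $|B|>1$ and $B$ contains elements $(i,y),(i',y')$ with $i\ne i'$, then every $b\in B$ and every $a\in\mathcal{N}'_{\mathcal{R}_C}(B)$ are connected by a path in $\mathcal{R}_C(B)$.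
   Context: $[n]=\{1,\dots,n\}$. Coherence relation: $((y^1,\dots,y^K),(i,y))\in\mathcal{R}_C$ iff $y^i=y$. For $B\subseteq\mathcal{B}$, $\mathcal{N}'_{\mathcal{R}_C}(B)=\{a\in\mathcal{A}:\exists b\in B,(a,b)\in\mathcal{R}_C\}$. Overlines denote complements in $\mathcal{A}$ or $\mathcal{B}$. For $(i,y)\in\mathcal{B}$, $i$ is called its $X$-level. *)

theory Defs
  imports "HOL-Library.FuncSet"
begin

definition Aset :: "nat \<Rightarrow> nat \<Rightarrow> (nat \<Rightarrow> nat) set" where
  "Aset K M = ({1..K} \<rightarrow>\<^sub>E {1..M})"

definition Bset :: "nat \<Rightarrow> nat \<Rightarrow> (nat \<times> nat) set" where
  "Bset K M = {1..K} \<times> {1..M}"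

definition RC :: "nat \<Rightarrow> nat \<Rightarrow> ((nat \<Rightarrow> nat) \<times> (nat \<times> nat)) set" where
  "RC K M = {(a, (i, y)). a \<in> Aset K M \<and> (i, y) \<in> Bset K M \<and> a i = y}"

definition Nbr :: "nat \<Rightarrow> nat \<Rightarrow> (nat \<times> nat) set \<Rightarrow> (nat \<Rightarrow> nat) set" where
  "Nbr K M B = {a \<in> Aset K M. \<exists>b\<in>B. (a, b) \<in> RC K M}"

definition RCB :: "nat \<Rightarrow> nat \<Rightarrow> (nat \<times> nat) set \<Rightarrow> ((nat \<Rightarrow> nat) \<times> (nat \<times> nat)) set" where
  "RCB K M B = (RC K M \<inter> (Nbr K M B \<times> B))
     \<union> (RC K M \<inter> ((Aset K M - Nbr K M B) \<times> (Bset K M - B)))"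

definition bip_edges :: "('a \<times> 'b) set \<Rightarrow> ('a + 'b) rel" where
  "bip_edges R = {(Inl a, Inr b) | a b. (a, b) \<in> R} \<union> {(Inr b, Inl a) | a b. (a, b) \<in> R}"

definition connected_in :: "('a \<times> 'b) set \<Rightarrow> 'a + 'b \<Rightarrow> 'a + 'b \<Rightarrow> bool" where
  "connected_in R u v \<longleftrightarrow> (u, v) \<in> (bip_edges R)\<^sup>*"

end

theory Submission
  imports Defs
begin

text \<open>Every edge of \<open>R\<^sub>C\<close> joins some \<open>a\<close> to \<open>(i, a i)\<close>, and \<open>R\<^sub>C(B)\<close> keeps exactly those edges
  whose two endpoints lie on the same side, i.e. \<open>a \<in> N'(B) \<longleftrightarrow> (i, a i) \<in> B\<close>. Overwriting
  coordinate \<open>j\<close> of \<open>a\<close> by \<open>y\<close> does not change the neighbour \<open>(i, a i)\<close> at a level \<open>i \<noteq> j\<close>,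
  so \<open>a \<midarrow> (i, a i) \<midarrow> a(j := y) \<midarrow> (j, y)\<close> is a path in \<open>R\<^sub>C(B)\<close> as soon as \<open>(i, a i)\<close> and
  \<open>(j, y)\<close> lie on the side of \<open>a\<close>. For (1) any level \<open>i \<noteq> j\<close> will do, since \<open>K \<ge> 2\<close>. For (2)
  the level \<open>i\<close> must carry a coordinate of \<open>a\<close> in \<open>B\<close>; if the only such level is that of \<open>b\<close>,
  one first moves to the vertex \<open>(k, z) \<in> B\<close> at another level, which exists by hypothesis.\<close>

lemma connected_in_trans:
  "connected_in R u v \<Longrightarrow> connected_in R v w \<Longrightarrow> connected_in R u w"
  unfolding connected_in_def by (rule rtrancl_trans)

lemma connected_in_edge: "(a, b) \<in> R \<Longrightarrow> connected_in R (Inl a) (Inr b)"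
  unfolding connected_in_def bip_edges_def by blast

lemma connected_in_edge_rev: "(a, b) \<in> R \<Longrightarrow> connected_in R (Inr b) (Inl a)"
  unfolding connected_in_def bip_edges_def by blast

lemma connected_in_zigzag:
  assumes "(a, b) \<in> R" "(a', b) \<in> R" "(a', b') \<in> R"
  shows "connected_in R (Inl a) (Inr b')"
  using assms by (meson connected_in_edge connected_in_edge_rev connected_in_trans)

lemma Aset_fun_upd:
  "a \<in> Aset K M \<Longrightarrow> (j, y) \<in> Bset K M \<Longrightarrow> a(j := y) \<in> Aset K M"
  unfolding Aset_def Bset_def by (auto simp: PiE_def extensional_def)

lemma RC_iff: "(a, (i, y)) \<in> RC K M \<longleftrightarrow> a \<in> Aset K M \<and> i \<in> {1..K} \<and> y = a i"
  unfolding RC_def Aset_def Bset_def by auto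

lemma Nbr_iff: "a \<in> Nbr K M B \<longleftrightarrow> a \<in> Aset K M \<and> (\<exists>i\<in>{1..K}. (i, a i) \<in> B)"
  unfolding Nbr_def by (force simp: RC_iff)

lemma RCB_iff:
  "(a, b) \<in> RCB K M B \<longleftrightarrow> (a, b) \<in> RC K M \<and> (a \<in> Nbr K M B \<longleftrightarrow> b \<in> B)"
  unfolding RCB_def by (auto simp: Nbr_def RC_def)

lemma connected_in_RCB_via_level:
  assumes a: "a \<in> Aset K M" and i: "i \<in> {1..K}" and jy: "(j, y) \<in> Bset K M" and "i \<noteq> j"
    and a_side: "a \<in> Nbr K M B \<longleftrightarrow> (i, a i) \<in> B"
    and jy_side: "(j, y) \<in> B \<longleftrightarrow> (i, a i) \<in> B"
  shows "connected_in (RCB K M B) (Inl a) (Inr (j, y))"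
proof -
  let ?a' = "a(j := y)"
  have a': "?a' \<in> Aset K M" using a jy by (rule Aset_fun_upd)
  have "j \<in> {1..K}" using jy by (simp add: Bset_def)
  have a'_side: "?a' \<in> Nbr K M B \<longleftrightarrow> (i, a i) \<in> B"
  proof
    assume "?a' \<in> Nbr K M B"
    then obtain l where "l \<in> {1..K}" "(l, ?a' l) \<in> B" by (auto simp: Nbr_iff)
    then show "(i, a i) \<in> B"
      using a a_side jy_side by (cases "l = j") (auto simp: Nbr_iff)
  next
    assume "(i, a i) \<in> B"
    then show "?a' \<in> Nbr K M B" using a' i \<open>i \<noteq> j\<close> by (auto simp: Nbr_iff)
  qed
  show ?thesis
  proof (rule connected_in_zigzag)
    show "(a, (i, a i)) \<in> RCB K M B" using a i a_side by (simp add: RCB_iff RC_iff)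
    show "(?a', (i, a i)) \<in> RCB K M B" using a' i \<open>i \<noteq> j\<close> a'_side by (simp add: RCB_iff RC_iff)
    show "(?a', (j, y)) \<in> RCB K M B"
      using a' \<open>j \<in> {1..K}\<close> a'_side jy_side by (simp add: RCB_iff RC_iff)
  qed
qed

lemma connected_in_RCB_outside:
  assumes "2 \<le> K" and a: "a \<in> Aset K M - Nbr K M B" and b: "b \<in> Bset K M - B"
  shows "connected_in (RCB K M B) (Inl a) (Inr b)"
proof -
  obtain j y where b_eq: "b = (j, y)" by fastforce
  then have "j \<in> {1..K}" using b by (simp add: Bset_def)
  obtain i where i: "i \<in> {1..K}" "i \<noteq> j"
    using \<open>2 \<le> K\<close> \<open>j \<in> {1..K}\<close> by (intro that[of "if j = 1 then 2 else 1"]) auto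
  have "(i, a i) \<notin> B" using a i by (auto simp: Nbr_iff)
  then show ?thesis
    using a b b_eq i by (auto intro: connected_in_RCB_via_level)
qed

lemma connected_in_RCB_inside:
  assumes B: "B \<subseteq> Bset K M" and two_levels: "(k, z) \<in> B" "(k', z') \<in> B" "k \<noteq> k'"
    and a: "a \<in> Nbr K M B" and b: "b \<in> B"
  shows "connected_in (RCB K M B) (Inl a) (Inr b)"
proof -
  obtain j y where b_eq: "b = (j, y)" by fastforce
  have jy: "(j, y) \<in> B" "(j, y) \<in> Bset K M" using b b_eq B by auto
  obtain i where i: "i \<in> {1..K}" "(i, a i) \<in> B" and a_A: "a \<in> Aset K M"
    using a by (auto simp: Nbr_iff)
  show ?thesis
  proof (cases "i = j")
    case False
    then show ?thesis using a_A i a jy b_eq by (auto intro: connected_in_RCB_via_level)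
  next
    case True
    obtain l x where lx: "(l, x) \<in> B" "l \<noteq> i"
      using two_levels by (cases "k = i") auto
    have lx_B: "(l, x) \<in> Bset K M" and "l \<in> {1..K}" using lx B by (auto simp: Bset_def)
    let ?a' = "a(l := x)"
    have a': "?a' \<in> Aset K M" using a_A lx_B by (rule Aset_fun_upd)
    have a'_Nbr: "?a' \<in> Nbr K M B" using a' \<open>l \<in> {1..K}\<close> lx by (auto simp: Nbr_iff)
    have "connected_in (RCB K M B) (Inl a) (Inr (l, x))"
      using a_A i lx_B lx a by (intro connected_in_RCB_via_level) auto
    moreover have "connected_in (RCB K M B) (Inr (l, x)) (Inl ?a')"
      using a' a'_Nbr \<open>l \<in> {1..K}\<close> lx by (intro connected_in_edge_rev) (simp add: RCB_iff RC_iff)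
    moreover have "connected_in (RCB K M B) (Inl ?a') (Inr (j, y))"
      using a' \<open>l \<in> {1..K}\<close> jy lx True a'_Nbr by (intro connected_in_RCB_via_level) auto
    ultimately show ?thesis unfolding b_eq by (blast intro: connected_in_trans)
  qed
qed

theorem lemma8:
  fixes K M :: nat and B :: "(nat \<times> nat) set"
  assumes K2: "2 \<le> K"
    and Bne: "B \<noteq> {}" and Bsub: "B \<subset> Bset K M"
  shows "(\<forall>a \<in> Aset K M - Nbr K M B. \<forall>b \<in> Bset K M - B.
            connected_in (RCB K M B) (Inl a) (Inr b))
       \<and> ((card B > 1 \<and> (\<exists>i y i' y'. (i, y) \<in> B \<and> (i', y') \<in> B \<and> i \<noteq> i'))
            \<longrightarrow> (\<forall>b \<in> B. \<forall>a \<in> Nbr K M B. connected_in (RCB K M B) (Inl a) (Inr b)))"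
proof (intro conjI impI)
  show "\<forall>a \<in> Aset K M - Nbr K M B. \<forall>b \<in> Bset K M - B.
          connected_in (RCB K M B) (Inl a) (Inr b)"
    using K2 by (blast intro: connected_in_RCB_outside)
next
  \<comment> \<open>\<open>card B > 1\<close> and \<open>B \<noteq> {}\<close> are implied by the two levels and not needed.\<close>
  assume "card B > 1 \<and> (\<exists>i y i' y'. (i, y) \<in> B \<and> (i', y') \<in> B \<and> i \<noteq> i')"
  then obtain i y i' y' where "(i, y) \<in> B" "(i', y') \<in> B" "i \<noteq> i'" by blast
  with Bsub show "\<forall>b \<in> B. \<forall>a \<in> Nbr K M B. connected_in (RCB K M B) (Inl a) (Inr b)"
    by (blast intro: connected_in_RCB_inside)
qed

end
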